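(* Let $h>0$, $\lambda\in[0,1)$, $\mu\in\mathcal{M}(h,\lambda)$, and let $f:\mathbb{R}\to\mathbb{R}$ be convex with $f(0)=0$. Then $\int\left(e^{f/2}-e^{-f/2}\right)^2d\mu\le\frac{8}{(1-\lambda)^2}\int e^{f(x)}\big((Df)(x)\big)^2\,d\mu(x).$
   Context: $\mathcal{M}(h,\lambda)$ is the class of symmetric Borel probability measures $\mu$ on $\mathbb{R}$ with $\mu([x+h,\infty))\le\lambda\,\mu([x,\infty))$ for all $x\ge0$. For convex $f:\mathbb{R}\to\mathbb{R}$, let $x_0$ be a point where $f$ attains its minimum; if $f$ attains no minimum (so $f$ is monotone), set $x_0=-\infty$ if $f$ is non-decreasing and $x_0=+\infty$ if $f$ is non-increasing. The discrete gradient (with step $h$) is $(Df)(x)=f(x)-f(x-h)$ for $x>x_0+h$; $(Df)(x)=f(x)-f(x_0)$ for $x\in[x_0-h,x_0+h]$; $(Df)(x)=f(x)-f(x+h)$ for $x<x_0-h$. (The quantity does not depend on the choice of minimizer $x_0$.) *)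

theory Defs
  imports "HOL-Probability.Probability"
begin

definition class_M :: "real \<Rightarrow> real \<Rightarrow> real measure \<Rightarrow> bool" where
  "class_M h lam \<mu> \<longleftrightarrow>
     sets \<mu> = sets borel \<and> prob_space \<mu> \<and>
     distr \<mu> borel uminus = \<mu> \<and>
     (\<forall>x\<ge>0. measure \<mu> {x+h..} \<le> lam * measure \<mu> {x..})"

text \<open>Discrete gradient with step h. If f attains its minimum, x0 is a minimiser;
  otherwise x0 = -inf if f is non-decreasing and x0 = +inf if f is non-increasing.\<close>
definition discrete_grad :: "real \<Rightarrow> (real \<Rightarrow> real) \<Rightarrow> real \<Rightarrow> real" where
  "discrete_grad h f x =
     (if \<exists>x0. \<forall>y. f x0 \<le> f y then
        (let x0 = (SOME x0. \<forall>y. f x0 \<le> f y) in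
          if x > x0 + h then f x - f (x - h)
          else if x < x0 - h then f x - f (x + h)
          else f x - f x0)
      else if mono f then f x - f (x - h)
      else f x - f (x + h))"

end

theory Submission
  imports Defs
begin

text \<open>Replace f by its even majorant m(x) = max (f x) (f (-x)): this only increases |f|,
  and m is non-decreasing on [0,\<infinity>) with m(0) = 0. By symmetry of \<mu> the left-hand side is then
  at most twice the integral of G^2 over [0,\<infinity>), where G = 2 sinh(m/2). The tail condition
  defining M(h,\<lambda>) gives a discrete Hardy inequality: for non-decreasing G with G(0) = 0, the
  integral of G^2 over [0,\<infinity>) is at most 4/(1-\<lambda>)^2 times that of (G(x) - G(max (x-h) 0))^2.
  To see it, split G(x) = (G(x) - G(x-h)) + G(x-h), weight the two squares by 2/(1-\<lambda>) and
  2/(1+\<lambda>), and bound the integral of G(x-h)^2 by \<lambda> times that of G^2 via the layer-cake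
  formula. Finally every increment of G is at most e^f (Df)^2 at x or at -x, because for convex f
  the discrete gradient is Df(x) = f(x) - min {f y | |y-x| \<le> h}.\<close>

section \<open>Convex functions and the discrete gradient\<close>

lemma convex_on_UNIV_le_max:
  fixes f :: "real \<Rightarrow> real"
  assumes "convex_on UNIV f" "x \<le> a" "a \<le> y"
  shows "f a \<le> max (f x) (f y)"
  using assms by (intro convex_on_le_max[of x y] convex_on_subset[OF assms(1)]) auto

lemma convex_on_mono_on_right_of_min:
  fixes f :: "real \<Rightarrow> real"
  assumes "convex_on UNIV f" "\<forall>y. f x0 \<le> f y"
  shows "mono_on {x0..} f"
  by (rule mono_onI) (use assms convex_on_UNIV_le_max[OF assms(1), of x0] in fastforce)

lemma convex_on_antimono_on_left_of_min:
  fixes f :: "real \<Rightarrow> real"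
  assumes "convex_on UNIV f" "\<forall>y. f x0 \<le> f y"
  shows "antimono_on {..x0} f"
  by (rule monotone_onI) (use assms convex_on_UNIV_le_max[OF assms(1), of _ _ x0] in fastforce)

text \<open>The minimum over the interval spanned by a descent and an ascent is global.\<close>
lemma convex_on_UNIV_attains_min:
  fixes f :: "real \<Rightarrow> real"
  assumes cf: "convex_on UNIV f" and "\<not> mono f" and "\<not> antimono f"
  shows "\<exists>x0. \<forall>y. f x0 \<le> f y"
proof -
  obtain c d where "c \<le> d" "f d < f c"
    using \<open>\<not> mono f\<close> unfolding mono_def by (auto simp: not_le)
  obtain b a where "b \<le> a" "f b < f a"
    using \<open>\<not> antimono f\<close> unfolding antimono_def by (auto simp: not_le)
  have "continuous_on {min c a..max c a} f"
    using convex_on_continuous[OF _ cf] continuous_on_subset by blast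
  then obtain x0 where x0: "\<forall>y\<in>{min c a..max c a}. f x0 \<le> f y"
    using continuous_attains_inf[OF compact_Icc] by (metis empty_iff)
  have "f x0 \<le> f y" for y
  proof -
    consider "y < min c a" | "y \<in> {min c a..max c a}" | "max c a < y" by force
    then show ?thesis
    proof cases
      case 1
      then have "f c \<le> max (f y) (f d)" using \<open>c \<le> d\<close> by (intro convex_on_UNIV_le_max[OF cf]) auto
      then show ?thesis using x0[rule_format, of c] \<open>f d < f c\<close> by auto
    next
      case 3
      then have "f a \<le> max (f b) (f y)" using \<open>b \<le> a\<close> by (intro convex_on_UNIV_le_max[OF cf]) auto
      then show ?thesis using x0[rule_format, of a] \<open>f b < f a\<close> by auto
    qed (use x0 in blast)
  qed
  then show ?thesis by blast
qed

text \<open>In each case of the definition, Df(x) = f(x) - f(z) where z minimises f on [x-h, x+h].\<close>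
lemma discrete_grad_ge:
  fixes f :: "real \<Rightarrow> real"
  assumes cf: "convex_on UNIV f" and y: "x - h \<le> y" "y \<le> x + h"
  shows "f x - f y \<le> discrete_grad h f x"
proof (cases "\<exists>x0. \<forall>y. f x0 \<le> f y")
  case True
  define x0 where "x0 = (SOME x0. \<forall>y. f x0 \<le> f y)"
  have min: "\<forall>y. f x0 \<le> f y" using someI_ex[OF True] unfolding x0_def .
  note right = mono_onD[OF convex_on_mono_on_right_of_min[OF cf min]]
  note left = monotone_onD[OF convex_on_antimono_on_left_of_min[OF cf min]]
  have "f (x - h) \<le> f y" if "x > x0 + h" using right[of "x - h" y] that y by auto
  moreover have "f (x + h) \<le> f y" if "x < x0 - h" using left[of y "x + h"] that y by auto
  ultimately show ?thesis
    using True min[rule_format, of y] unfolding discrete_grad_def x0_def[symmetric] Let_def by auto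
next
  case False
  then have "antimono f" if "\<not> mono f" using convex_on_UNIV_attains_min[OF cf that] by blast
  then show ?thesis
    using False y unfolding discrete_grad_def by (auto dest: monoD antimonoD)
qed

section \<open>Increments of sinh and the even majorant\<close>

lemma exp_diff_le:
  fixes u v :: real
  assumes "u \<le> v"
  shows "exp v - exp u \<le> exp v * (v - u)"
proof -
  have "exp v * (1 + (u - v)) \<le> exp v * exp (u - v)"
    by (intro mult_left_mono exp_ge_add_one_self) auto
  then show ?thesis by (simp add: exp_diff algebra_simps)
qed

lemma sinh_half_increment_sq_le:
  fixes a b :: real
  assumes "b \<le> a" "- a \<le> b"
  shows "(2 * sinh (a / 2) - 2 * sinh (b / 2))\<^sup>2 \<le> exp a * (a - b)\<^sup>2"
proof -
  have "exp (a / 2) - exp (b / 2) \<le> exp (a / 2) * ((a - b) / 2)"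
    using exp_diff_le[of "b / 2" "a / 2"] assms by (simp add: diff_divide_distrib)
  moreover have "exp (- b / 2) - exp (- a / 2) \<le> exp (- b / 2) * ((a - b) / 2)"
    using exp_diff_le[of "- a / 2" "- b / 2"] assms by (simp add: diff_divide_distrib)
  moreover have "exp (- b / 2) * ((a - b) / 2) \<le> exp (a / 2) * ((a - b) / 2)"
    using assms by (intro mult_right_mono) auto
  ultimately have "2 * sinh (a / 2) - 2 * sinh (b / 2) \<le> exp (a / 2) * (a - b)"
    by (simp add: sinh_field_def field_simps)
  moreover have "0 \<le> 2 * sinh (a / 2) - 2 * sinh (b / 2)" using assms by simp
  ultimately have "(2 * sinh (a / 2) - 2 * sinh (b / 2))\<^sup>2 \<le> (exp (a / 2) * (a - b))\<^sup>2"
    by (rule power_mono)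
  also have "\<dots> = exp a * (a - b)\<^sup>2"
    by (simp add: power_mult_distrib power2_eq_square flip: exp_add)
  finally show ?thesis .
qed

definition even_majorant :: "(real \<Rightarrow> real) \<Rightarrow> real \<Rightarrow> real" where
  "even_majorant f x = max (f x) (f (- x))"

lemma continuous_on_even_majorant:
  fixes f :: "real \<Rightarrow> real"
  assumes "continuous_on UNIV f"
  shows "continuous_on UNIV (even_majorant f)"
  unfolding even_majorant_def
  by (intro continuous_intros continuous_on_compose2[OF assms]) auto

lemma convex_on_reflect_sum_nonneg:
  fixes f :: "real \<Rightarrow> real"
  assumes "convex_on UNIV f" "f 0 = 0"
  shows "0 \<le> f x + f (- x)"
  using convex_onD[OF assms(1), of "1/2" x "- x"] assms(2) by simp

lemma abs_le_even_majorant: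
  fixes f :: "real \<Rightarrow> real"
  assumes "convex_on UNIV f" "f 0 = 0"
  shows "\<bar>f x\<bar> \<le> even_majorant f \<bar>x\<bar>"
  using convex_on_reflect_sum_nonneg[OF assms, of x]
  by (cases "0 \<le> x") (auto simp: even_majorant_def)

lemma even_majorant_mono_on:
  fixes f :: "real \<Rightarrow> real"
  assumes cf: "convex_on UNIV f" and "f 0 = 0"
  shows "mono_on {0..} (even_majorant f)"
proof (rule mono_onI)
  fix y x :: real
  assume "y \<in> {0..}" "x \<in> {0..}" "y \<le> x"
  then have "f y \<le> max (f 0) (f x)" "f (- y) \<le> max (f (- x)) (f 0)"
    by (auto intro: convex_on_UNIV_le_max[OF cf])
  moreover have "0 \<le> even_majorant f x"
    using convex_on_reflect_sum_nonneg[OF assms, of x] by (auto simp: even_majorant_def)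
  ultimately show "even_majorant f y \<le> even_majorant f x"
    using \<open>f 0 = 0\<close> by (auto simp: even_majorant_def)
qed

lemma exp_half_diff_sq_le_even_majorant:
  fixes f :: "real \<Rightarrow> real"
  assumes "convex_on UNIV f" "f 0 = 0"
  shows "(exp (f x / 2) - exp (- f x / 2))\<^sup>2 \<le> (2 * sinh (even_majorant f \<bar>x\<bar> / 2))\<^sup>2"
proof -
  have "\<bar>sinh (f x / 2)\<bar> \<le> sinh (even_majorant f \<bar>x\<bar> / 2)"
    using abs_le_even_majorant[OF assms, of x] by (simp flip: sinh_real_abs)
  then have "(sinh (f x / 2))\<^sup>2 \<le> (sinh (even_majorant f \<bar>x\<bar> / 2))\<^sup>2"
    by (metis abs_ge_zero power2_abs power_mono)
  moreover have "exp (t / 2) - exp (- t / 2) = 2 * sinh (t / 2)" for t :: real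
    by (simp add: sinh_field_def)
  ultimately show ?thesis by (simp add: power_mult_distrib)
qed

lemma sq_le_discrete_grad:
  fixes f :: "real \<Rightarrow> real"
  assumes "convex_on UNIV f" "x - h \<le> y" "y \<le> x + h" "0 \<le> d" "d \<le> f x - f y"
  shows "exp (f x) * d\<^sup>2 \<le> exp (f x) * (discrete_grad h f x)\<^sup>2"
  using discrete_grad_ge[OF assms(1-3)] assms(4,5)
  by (intro mult_left_mono power_mono) auto

lemma even_majorant_increment_le_discrete_grad:
  fixes f :: "real \<Rightarrow> real"
  assumes cf: "convex_on UNIV f" and f0: "f 0 = 0" and "0 \<le> h" "0 < x"
  defines "a \<equiv> even_majorant f x" and "b \<equiv> even_majorant f (max (x - h) 0)"
  shows "(2 * sinh (a / 2) - 2 * sinh (b / 2))\<^sup>2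
    \<le> exp (f x) * (discrete_grad h f x)\<^sup>2 + exp (f (- x)) * (discrete_grad h f (- x))\<^sup>2"
proof -
  define y where "y = max (x - h) 0"
  have y: "0 \<le> y" "y \<le> x" "x - h \<le> y" "y \<le> x + h" using assms by (auto simp: y_def)
  have "0 \<le> b"
    using convex_on_reflect_sum_nonneg[OF cf f0, of y] by (auto simp: b_def y_def even_majorant_def)
  moreover have "b \<le> a"
    unfolding a_def b_def y_def[symmetric] using y
    by (intro mono_onD[OF even_majorant_mono_on[OF cf f0]]) auto
  ultimately have "(2 * sinh (a / 2) - 2 * sinh (b / 2))\<^sup>2 \<le> exp a * (a - b)\<^sup>2"
    by (intro sinh_half_increment_sq_le) auto
  also have "\<dots> \<le> exp (f x) * (discrete_grad h f x)\<^sup>2 + exp (f (- x)) * (discrete_grad h f (- x))\<^sup>2"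
  proof (cases "f (- x) \<le> f x")
    case True
    then have "a = f x" "a - b \<le> f x - f y" by (auto simp: a_def b_def y_def even_majorant_def)
    then have "exp a * (a - b)\<^sup>2 \<le> exp (f x) * (discrete_grad h f x)\<^sup>2"
      using sq_le_discrete_grad[OF cf y(3,4), of "a - b"] \<open>b \<le> a\<close> by simp
    then show ?thesis by (simp add: add_increasing2)
  next
    case False
    then have "a = f (- x)" "a - b \<le> f (- x) - f (- y)"
      by (auto simp: a_def b_def y_def even_majorant_def)
    then have "exp a * (a - b)\<^sup>2 \<le> exp (f (- x)) * (discrete_grad h f (- x))\<^sup>2"
      using sq_le_discrete_grad[OF cf, of "- x" h "- y" "a - b"] y \<open>b \<le> a\<close> by simp
    then show ?thesis by (simp add: add_increasing)
  qed
  finally show ?thesis .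
qed

section \<open>Symmetric measures and the layer-cake formula\<close>

lemma nn_integral_reflect:
  fixes F :: "real \<Rightarrow> ennreal"
  assumes sets: "sets \<mu> = sets borel" and sym: "distr \<mu> borel uminus = \<mu>"
    and [measurable]: "F \<in> borel_measurable borel"
  shows "(\<integral>\<^sup>+x. F (- x) \<partial>\<mu>) = (\<integral>\<^sup>+x. F x \<partial>\<mu>)"
proof -
  have [measurable_cong]: "sets \<mu> = sets borel" by (rule sets)
  have "(\<integral>\<^sup>+x. F x \<partial>\<mu>) = (\<integral>\<^sup>+x. F x \<partial>distr \<mu> borel uminus)" by (simp add: sym)
  also have "\<dots> = (\<integral>\<^sup>+x. F (- x) \<partial>\<mu>)" by (rule nn_integral_distr) measurable
  finally show ?thesis ..
qed

lemma nn_integral_abs_le_twice_nonneg_part: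
  fixes F :: "real \<Rightarrow> ennreal"
  assumes sets: "sets \<mu> = sets borel" and sym: "distr \<mu> borel uminus = \<mu>"
    and [measurable]: "F \<in> borel_measurable borel"
  shows "(\<integral>\<^sup>+x. F \<bar>x\<bar> \<partial>\<mu>) \<le> 2 * (\<integral>\<^sup>+x\<in>{0..}. F x \<partial>\<mu>)"
proof -
  have [measurable_cong]: "sets \<mu> = sets borel" by (rule sets)
  have "(\<integral>\<^sup>+x. F \<bar>x\<bar> \<partial>\<mu>)
      \<le> (\<integral>\<^sup>+x. F x * indicator {0..} x + F (- x) * indicator {0..} (- x) \<partial>\<mu>)"
    by (intro nn_integral_mono) (auto simp: indicator_def abs_if)
  also have "\<dots> = (\<integral>\<^sup>+x\<in>{0..}. F x \<partial>\<mu>) + (\<integral>\<^sup>+x. F (- x) * indicator {0..} (- x) \<partial>\<mu>)"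
    by (rule nn_integral_add) measurable
  also have "(\<integral>\<^sup>+x. F (- x) * indicator {0..} (- x) \<partial>\<mu>) = (\<integral>\<^sup>+x\<in>{0..}. F x \<partial>\<mu>)"
    using nn_integral_reflect[OF sets sym, of "\<lambda>x. F x * indicator {0..} x"] by simp
  finally show ?thesis by (simp add: mult_2)
qed

lemma nn_integral_pos_part_reflect_le:
  fixes R :: "real \<Rightarrow> ennreal"
  assumes sets: "sets \<mu> = sets borel" and sym: "distr \<mu> borel uminus = \<mu>"
    and [measurable]: "R \<in> borel_measurable borel"
  shows "(\<integral>\<^sup>+x\<in>{0<..}. R x + R (- x) \<partial>\<mu>) \<le> (\<integral>\<^sup>+x. R x \<partial>\<mu>)"
proof -
  have [measurable_cong]: "sets \<mu> = sets borel" by (rule sets)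
  have "(\<integral>\<^sup>+x\<in>{0<..}. R x + R (- x) \<partial>\<mu>)
      = (\<integral>\<^sup>+x\<in>{0<..}. R x \<partial>\<mu>) + (\<integral>\<^sup>+x. R (- x) * indicator {0<..} x \<partial>\<mu>)"
    by (subst distrib_right, rule nn_integral_add) measurable
  also have "(\<integral>\<^sup>+x. R (- x) * indicator {0<..} x \<partial>\<mu>) = (\<integral>\<^sup>+x\<in>{..<0}. R x \<partial>\<mu>)"
    using nn_integral_reflect[OF sets sym, of "\<lambda>x. R x * indicator {..<0} x"]
    by (simp add: indicator_def)
  also have "(\<integral>\<^sup>+x\<in>{0<..}. R x \<partial>\<mu>) + \<dots> = (\<integral>\<^sup>+x. R x * indicator {0<..} x + R x * indicator {..<0} x \<partial>\<mu>)"
    by (rule nn_integral_add[symmetric]) measurable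
  also have "\<dots> \<le> (\<integral>\<^sup>+x. R x \<partial>\<mu>)"
    by (intro nn_integral_mono) (auto simp: indicator_def)
  finally show ?thesis .
qed

lemma (in sigma_finite_measure) nn_integral_layer_cake:
  fixes g :: "'a \<Rightarrow> real"
  assumes [measurable]: "g \<in> borel_measurable M" and nonneg: "\<And>x. 0 \<le> g x"
  shows "(\<integral>\<^sup>+x. ennreal (g x) \<partial>M) = (\<integral>\<^sup>+t\<in>{0<..}. emeasure M {x\<in>space M. t \<le> g x} \<partial>lborel)"
proof -
  interpret pair_sigma_finite M lborel
    by (simp add: pair_sigma_finite_def sigma_finite_measure_axioms lborel.sigma_finite_measure_axioms)
  have "(\<integral>\<^sup>+x. ennreal (g x) \<partial>M) = (\<integral>\<^sup>+x. (\<integral>\<^sup>+t. indicator {0<..g x} t \<partial>lborel) \<partial>M)"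
    using nonneg by simp
  also have "\<dots> = (\<integral>\<^sup>+x. (\<integral>\<^sup>+t. indicator {x\<in>space M. t \<le> g x} x * indicator {0<..} t \<partial>lborel) \<partial>M)"
    by (intro nn_integral_cong) (auto simp: indicator_def)
  also have "\<dots> = (\<integral>\<^sup>+t. (\<integral>\<^sup>+x. indicator {x\<in>space M. t \<le> g x} x * indicator {0<..} t \<partial>M) \<partial>lborel)"
    by (rule Fubini'[symmetric]) measurable
  also have "\<dots> = (\<integral>\<^sup>+t\<in>{0<..}. emeasure M {x\<in>space M. t \<le> g x} \<partial>lborel)"
    by (intro nn_integral_cong) (simp add: nn_integral_multc)
  finally show ?thesis .
qed

lemma (in finite_measure) borel_measurable_emeasure_upper_level_sets:
  fixes g :: "'a \<Rightarrow> real"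
  assumes [measurable]: "g \<in> borel_measurable M"
  shows "(\<lambda>t. emeasure M {x\<in>space M. t \<le> g x}) \<in> borel_measurable borel"
proof -
  have "mono (\<lambda>t. - measure M {x\<in>space M. t \<le> g x})"
    by (intro monoI le_imp_neg_le finite_measure_mono) auto
  then have "(\<lambda>t. - measure M {x\<in>space M. t \<le> g x}) \<in> borel_measurable borel"
    by (rule borel_measurable_mono)
  then have "(\<lambda>t. ennreal (- (- measure M {x\<in>space M. t \<le> g x}))) \<in> borel_measurable borel"
    by measurable
  then show ?thesis by (simp add: emeasure_eq_measure)
qed

section \<open>A discrete Hardy inequality on the class M(h, \<lambda>)\<close>

text \<open>An upper level set of u in [0,\<infinity>) is a closed half-line [c,\<infinity>), to which the
  tail condition of M(h,\<lambda>) applies directly.\<close>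
lemma class_M_upper_level_set_shift:
  fixes u :: "real \<Rightarrow> real"
  assumes cm: "class_M h lam \<mu>" and "0 \<le> lam"
    and cont: "continuous_on UNIV u" and mono: "mono_on {0..} u"
  shows "emeasure \<mu> {x. h \<le> x \<and> t \<le> u (x - h)} \<le> lam * emeasure \<mu> {x. 0 \<le> x \<and> t \<le> u x}"
proof -
  interpret prob_space \<mu> using cm by (simp add: class_M_def)
  have sets: "sets \<mu> = sets borel" using cm by (simp add: class_M_def)
  define B where "B = {x. 0 \<le> x \<and> t \<le> u x}"
  have shift_B: "x - h \<in> B" if "h \<le> x" "t \<le> u (x - h)" for x using that by (simp add: B_def)
  show ?thesis
  proof (cases "B = {}")
    case False
    have "closed B"
      unfolding B_def Collect_conj_eq using cont
      by (intro closed_Int closed_Collect_le continuous_on_const continuous_on_id) auto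
    moreover have bdd: "bdd_below B" by (auto simp: B_def intro: bdd_belowI[of _ 0])
    ultimately have "Inf B \<in> B" using closed_contains_Inf False by blast
    have "B = {Inf B..}"
    proof
      show "B \<subseteq> {Inf B..}" using cInf_lower[OF _ bdd] by auto
      show "{Inf B..} \<subseteq> B"
        using \<open>Inf B \<in> B\<close> mono by (auto simp: B_def dest: mono_onD intro: order_trans)
    qed
    have "emeasure \<mu> {x. h \<le> x \<and> t \<le> u (x - h)} \<le> emeasure \<mu> {Inf B + h..}"
      using shift_B cInf_lower[OF _ bdd] by (intro emeasure_mono) (force simp: sets)+
    also have "\<dots> \<le> lam * measure \<mu> {Inf B..}"
      using cm \<open>Inf B \<in> B\<close> unfolding class_M_def B_def
      by (simp add: emeasure_eq_measure ennreal_leI)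
    also have "\<dots> = lam * emeasure \<mu> B"
      using \<open>0 \<le> lam\<close> \<open>B = {Inf B..}\<close> by (simp add: emeasure_eq_measure ennreal_mult)
    finally show ?thesis by (simp add: B_def)
  next
    case True
    then have "{x. h \<le> x \<and> t \<le> u (x - h)} = {}" using shift_B by blast
    then show ?thesis by (metis emeasure_empty zero_le)
  qed
qed

lemma class_M_nn_integral_shift_le:
  fixes u :: "real \<Rightarrow> real"
  assumes cm: "class_M h lam \<mu>" and lam: "0 \<le> lam"
    and cont: "continuous_on UNIV u" and mono: "mono_on {0..} u" and nonneg: "\<forall>x\<ge>0. 0 \<le> u x"
  shows "(\<integral>\<^sup>+x\<in>{h..}. ennreal (u (x - h)) \<partial>\<mu>) \<le> lam * (\<integral>\<^sup>+x\<in>{0..}. ennreal (u x) \<partial>\<mu>)"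
proof -
  interpret prob_space \<mu> using cm by (simp add: class_M_def)
  have sets: "sets \<mu> = sets borel" using cm by (simp add: class_M_def)
  note [measurable_cong] = sets and space = sets_eq_imp_space_eq[OF sets, simplified]
  have [measurable]: "u \<in> borel_measurable borel" using cont by (rule borel_measurable_continuous_onI)
  define v where "v x = u x * indicator {0..} x" for x
  define w where "w x = u (x - h) * indicator {h..} x" for x
  have [measurable]: "v \<in> borel_measurable \<mu>" "w \<in> borel_measurable \<mu>"
    unfolding v_def w_def by measurable
  have nonneg_vw: "0 \<le> v x" "0 \<le> w x" for x using nonneg by (auto simp: v_def w_def indicator_def)
  have ennreal_vw: "(\<integral>\<^sup>+x\<in>{0..}. ennreal (u x) \<partial>\<mu>) = (\<integral>\<^sup>+x. ennreal (v x) \<partial>\<mu>)"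
    "(\<integral>\<^sup>+x\<in>{h..}. ennreal (u (x - h)) \<partial>\<mu>) = (\<integral>\<^sup>+x. ennreal (w x) \<partial>\<mu>)"
    by (auto intro!: nn_integral_cong simp: v_def w_def indicator_def)
  have level_sets: "{x\<in>space \<mu>. t \<le> v x} = {x. 0 \<le> x \<and> t \<le> u x}"
    "{x\<in>space \<mu>. t \<le> w x} = {x. h \<le> x \<and> t \<le> u (x - h)}" if "0 < t" for t
    using that by (auto simp: v_def w_def indicator_def space)
  have "(\<integral>\<^sup>+x. ennreal (w x) \<partial>\<mu>) = (\<integral>\<^sup>+t\<in>{0<..}. emeasure \<mu> {x\<in>space \<mu>. t \<le> w x} \<partial>lborel)"
    by (rule nn_integral_layer_cake) (use nonneg_vw in auto)
  also have "\<dots> \<le> (\<integral>\<^sup>+t\<in>{0<..}. lam * emeasure \<mu> {x\<in>space \<mu>. t \<le> v x} \<partial>lborel)"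
    by (intro nn_integral_mono)
      (auto simp: level_sets indicator_def intro: class_M_upper_level_set_shift[OF cm lam cont mono])
  also have "\<dots> = lam * (\<integral>\<^sup>+t\<in>{0<..}. emeasure \<mu> {x\<in>space \<mu>. t \<le> v x} \<partial>lborel)"
    using borel_measurable_emeasure_upper_level_sets[of v]
    by (subst nn_integral_cmult[symmetric]) (auto simp: mult.assoc)
  also have "\<dots> = lam * (\<integral>\<^sup>+x. ennreal (v x) \<partial>\<mu>)"
    by (subst nn_integral_layer_cake) (use nonneg_vw in auto)
  finally show ?thesis by (simp only: ennreal_vw)
qed

lemma power2_add_le_weighted:
  fixes p q a b :: real
  assumes "0 < a" "0 < b" "a + b = 1"
  shows "(p + q)\<^sup>2 \<le> p\<^sup>2 / a + q\<^sup>2 / b"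
proof -
  have "a * b * (p\<^sup>2 / a + q\<^sup>2 / b - (p + q)\<^sup>2) = (b * p - a * q)\<^sup>2"
    using assms by (simp add: field_simps power2_eq_square) algebra
  then have "0 \<le> a * b * (p\<^sup>2 / a + q\<^sup>2 / b - (p + q)\<^sup>2)" by simp
  then show ?thesis using mult_pos_pos[OF assms(1,2)] by (simp add: zero_le_mult_iff)
qed

lemma weighted_absorb_le:
  fixes lam \<alpha> \<delta> :: real
  assumes lam: "0 \<le> lam" "lam < 1" and "0 \<le> \<delta>"
    and le: "\<alpha> \<le> 2 / (1 - lam) * \<delta> + 2 / (1 + lam) * (lam * \<alpha>)"
  shows "\<alpha> \<le> 4 / (1 - lam)\<^sup>2 * \<delta>"
proof -
  have "(1 - lam) * (1 + lam) * \<alpha>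
      \<le> (1 - lam) * (1 + lam) * (2 / (1 - lam) * \<delta> + 2 / (1 + lam) * (lam * \<alpha>))"
    using lam le by (intro mult_left_mono) auto
  also have "\<dots> = 2 * (1 + lam) * \<delta> + 2 * (1 - lam) * lam * \<alpha>"
    using lam by (simp add: divide_simps) (simp add: algebra_simps)
  finally have "(1 - lam)\<^sup>2 * \<alpha> \<le> 2 * (1 + lam) * \<delta>"
    by (simp add: power2_eq_square algebra_simps)
  also have "\<dots> \<le> 4 * \<delta>" using lam \<open>0 \<le> \<delta>\<close> by (intro mult_right_mono) auto
  finally show ?thesis using lam by (simp add: field_simps)
qed

lemma ennreal_absorb_le:
  fixes lam :: real and I D :: ennreal
  assumes lam: "0 \<le> lam" "lam < 1" and "I \<noteq> \<infinity>"
    and le: "I \<le> ennreal (2 / (1 - lam)) * D + ennreal (2 / (1 + lam)) * (lam * I)"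
  shows "I \<le> ennreal (4 / (1 - lam)\<^sup>2) * D"
proof (cases "D = \<infinity>")
  case True
  then show ?thesis using lam by (simp add: ennreal_mult_top)
next
  case False
  then obtain \<delta> where D: "D = ennreal \<delta>" "0 \<le> \<delta>" by (cases D) auto
  obtain \<alpha> where I: "I = ennreal \<alpha>" "0 \<le> \<alpha>" using \<open>I \<noteq> \<infinity>\<close> by (cases I) auto
  have "0 \<le> 2 / (1 - lam)" "0 \<le> 2 / (1 + lam)" using lam by auto
  then have "ennreal (2 / (1 - lam)) * D + ennreal (2 / (1 + lam)) * (lam * I)
      = ennreal (2 / (1 - lam) * \<delta> + 2 / (1 + lam) * (lam * \<alpha>))"
    unfolding I D using lam I(2) D(2) by (simp only: ennreal_mult ennreal_plus mult_nonneg_nonneg)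
  then have "ennreal \<alpha> \<le> ennreal (2 / (1 - lam) * \<delta> + 2 / (1 + lam) * (lam * \<alpha>))"
    using le I by simp
  then have "\<alpha> \<le> 2 / (1 - lam) * \<delta> + 2 / (1 + lam) * (lam * \<alpha>)"
    using lam I D by (subst (asm) ennreal_le_iff) auto
  then have "\<alpha> \<le> 4 / (1 - lam)\<^sup>2 * \<delta>" by (rule weighted_absorb_le[OF lam D(2)])
  then show ?thesis using I D by (simp add: ennreal_mult[symmetric] ennreal_leI)
qed

lemma class_M_hardy_bounded:
  fixes g :: "real \<Rightarrow> real"
  assumes cm: "class_M h lam \<mu>" and lam: "0 \<le> lam" "lam < 1"
    and cont: "continuous_on UNIV g" and mono: "mono_on {0..} g" and g0: "g 0 = 0"
    and bounded: "\<forall>x. g x \<le> K"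
  shows "(\<integral>\<^sup>+x\<in>{0..}. ennreal ((g x)\<^sup>2) \<partial>\<mu>)
    \<le> ennreal (4 / (1 - lam)\<^sup>2) * (\<integral>\<^sup>+x\<in>{0..}. ennreal ((g x - g (max (x - h) 0))\<^sup>2) \<partial>\<mu>)"
proof -
  interpret prob_space \<mu> using cm by (simp add: class_M_def)
  have [measurable_cong]: "sets \<mu> = sets borel" using cm by (simp add: class_M_def)
  have [measurable]: "g \<in> borel_measurable borel" using cont by (rule borel_measurable_continuous_onI)
  have nonneg: "0 \<le> g x" if "0 \<le> x" for x using mono_onD[OF mono, of 0 x] g0 that by simp
  define A B where "A = 2 / (1 - lam)" and "B = 2 / (1 + lam)"
  have "0 \<le> A" "0 \<le> B" using lam by (auto simp: A_def B_def)
  have pointwise: "ennreal ((g x)\<^sup>2) * indicator {0..} x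
      \<le> ennreal A * (ennreal ((g x - g (max (x - h) 0))\<^sup>2) * indicator {0..} x)
        + ennreal B * (ennreal ((g (x - h))\<^sup>2) * indicator {h..} x)" for x
  proof (cases "0 \<le> x")
    case True
    let ?y = "max (x - h) 0" and ?s = "(g (x - h))\<^sup>2 * indicator {h..} x"
    have "(g ?y)\<^sup>2 \<le> ?s"
      using g0 by (auto simp: indicator_def max_def)
    moreover have "(g x)\<^sup>2 \<le> A * (g x - g ?y)\<^sup>2 + B * (g ?y)\<^sup>2"
      using power2_add_le_weighted[of "(1 - lam) / 2" "(1 + lam) / 2" "g x - g ?y" "g ?y"] lam
      by (simp add: A_def B_def field_simps)
    ultimately have "(g x)\<^sup>2 \<le> A * (g x - g ?y)\<^sup>2 + B * ?s"
      using \<open>0 \<le> B\<close> by (smt (verit) mult_left_mono)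
    then have "ennreal ((g x)\<^sup>2) \<le> ennreal (A * (g x - g ?y)\<^sup>2 + B * ?s)"
      by (rule ennreal_leI)
    also have "\<dots> = ennreal A * ennreal ((g x - g ?y)\<^sup>2)
        + ennreal B * (ennreal ((g (x - h))\<^sup>2) * indicator {h..} x)"
      using \<open>0 \<le> A\<close> \<open>0 \<le> B\<close> by (simp add: ennreal_mult ennreal_indicator)
    finally show ?thesis using True by simp
  qed simp
  have shift: "(\<integral>\<^sup>+x\<in>{h..}. ennreal ((g (x - h))\<^sup>2) \<partial>\<mu>)
      \<le> lam * (\<integral>\<^sup>+x\<in>{0..}. ennreal ((g x)\<^sup>2) \<partial>\<mu>)"
  proof (rule class_M_nn_integral_shift_le[OF cm lam(1)])
    show "continuous_on UNIV (\<lambda>x. (g x)\<^sup>2)" by (intro continuous_intros cont)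
    show "mono_on {0..} (\<lambda>x. (g x)\<^sup>2)"
      using nonneg by (intro mono_onI power_mono mono_onD[OF mono]) auto
  qed simp
  have "(\<integral>\<^sup>+x\<in>{0..}. ennreal ((g x)\<^sup>2) \<partial>\<mu>)
      \<le> (\<integral>\<^sup>+x. ennreal A * (ennreal ((g x - g (max (x - h) 0))\<^sup>2) * indicator {0..} x)
        + ennreal B * (ennreal ((g (x - h))\<^sup>2) * indicator {h..} x) \<partial>\<mu>)"
    by (rule nn_integral_mono) (rule pointwise)
  also have "\<dots> = ennreal A * (\<integral>\<^sup>+x\<in>{0..}. ennreal ((g x - g (max (x - h) 0))\<^sup>2) \<partial>\<mu>)
      + ennreal B * (\<integral>\<^sup>+x\<in>{h..}. ennreal ((g (x - h))\<^sup>2) \<partial>\<mu>)"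
    by (simp add: nn_integral_add nn_integral_cmult)
  also have "\<dots> \<le> ennreal A * (\<integral>\<^sup>+x\<in>{0..}. ennreal ((g x - g (max (x - h) 0))\<^sup>2) \<partial>\<mu>)
      + ennreal B * (lam * (\<integral>\<^sup>+x\<in>{0..}. ennreal ((g x)\<^sup>2) \<partial>\<mu>))"
    using shift by (intro add_left_mono mult_left_mono) auto
  finally have le: "(\<integral>\<^sup>+x\<in>{0..}. ennreal ((g x)\<^sup>2) \<partial>\<mu>) \<le> \<dots>" .
  have "(\<integral>\<^sup>+x\<in>{0..}. ennreal ((g x)\<^sup>2) \<partial>\<mu>) \<le> (\<integral>\<^sup>+x. ennreal (K\<^sup>2) \<partial>\<mu>)"
    using nonneg bounded
    by (intro nn_integral_mono) (auto simp: indicator_def intro!: ennreal_leI power_mono)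
  then have "(\<integral>\<^sup>+x\<in>{0..}. ennreal ((g x)\<^sup>2) \<partial>\<mu>) \<noteq> \<infinity>"
    by (auto simp: emeasure_space_1 top_unique)
  then show ?thesis using le unfolding A_def B_def by (rule ennreal_absorb_le[OF lam])
qed

lemma SUP_ennreal_min_power2:
  fixes a :: real
  assumes "0 \<le> a"
  shows "(SUP n. ennreal ((min a (real n))\<^sup>2)) = ennreal (a\<^sup>2)"
proof (rule antisym)
  show "(SUP n. ennreal ((min a (real n))\<^sup>2)) \<le> ennreal (a\<^sup>2)"
    using assms by (intro SUP_least ennreal_leI power_mono) auto
  obtain n where "a \<le> real n" using real_arch_simple by blast
  then show "ennreal (a\<^sup>2) \<le> (SUP n. ennreal ((min a (real n))\<^sup>2))"
    by (intro SUP_upper2[of n]) auto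
qed

lemma class_M_hardy:
  fixes g :: "real \<Rightarrow> real"
  assumes cm: "class_M h lam \<mu>" and lam: "0 \<le> lam" "lam < 1"
    and cont: "continuous_on UNIV g" and mono: "mono_on {0..} g" and g0: "g 0 = 0"
  shows "(\<integral>\<^sup>+x\<in>{0..}. ennreal ((g x)\<^sup>2) \<partial>\<mu>)
    \<le> ennreal (4 / (1 - lam)\<^sup>2) * (\<integral>\<^sup>+x\<in>{0..}. ennreal ((g x - g (max (x - h) 0))\<^sup>2) \<partial>\<mu>)"
proof -
  have [measurable_cong]: "sets \<mu> = sets borel" using cm by (simp add: class_M_def)
  have [measurable]: "g \<in> borel_measurable borel" using cont by (rule borel_measurable_continuous_onI)
  have nonneg: "0 \<le> g x" if "0 \<le> x" for x using mono_onD[OF mono, of 0 x] g0 that by simp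
  define G where "G n x = ennreal ((min (g x) (real n))\<^sup>2) * indicator {0..} x" for n x
  have "incseq G"
  proof (intro incseq_SucI le_funI)
    fix n x
    have "(min (g x) (real n))\<^sup>2 \<le> (min (g x) (real (Suc n)))\<^sup>2" if "0 \<le> x"
      using nonneg[OF that] by (intro power_mono) auto
    then show "G n x \<le> G (Suc n) x" by (auto simp: G_def indicator_def intro: ennreal_leI)
  qed
  have "(\<integral>\<^sup>+x\<in>{0..}. ennreal ((g x)\<^sup>2) \<partial>\<mu>) = (\<integral>\<^sup>+x. (SUP n. G n x) \<partial>\<mu>)"
    using nonneg by (intro nn_integral_cong) (simp add: G_def SUP_ennreal_min_power2 indicator_def)
  also have "\<dots> = (SUP n. integral\<^sup>N \<mu> (G n))"
    by (rule nn_integral_monotone_convergence_SUP[OF \<open>incseq G\<close>]) (unfold G_def, measurable)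
  also have "\<dots> \<le> ennreal (4 / (1 - lam)\<^sup>2) * (\<integral>\<^sup>+x\<in>{0..}. ennreal ((g x - g (max (x - h) 0))\<^sup>2) \<partial>\<mu>)"
  proof (rule SUP_least)
    fix n
    let ?gn = "\<lambda>x. min (g x) (real n)"
    have "integral\<^sup>N \<mu> (G n)
        \<le> ennreal (4 / (1 - lam)\<^sup>2) * (\<integral>\<^sup>+x\<in>{0..}. ennreal ((?gn x - ?gn (max (x - h) 0))\<^sup>2) \<partial>\<mu>)"
      unfolding G_def
    proof (rule class_M_hardy_bounded[OF cm lam, where K = n])
      show "continuous_on UNIV ?gn" by (intro continuous_intros cont)
      show "mono_on {0..} ?gn" by (intro mono_onI min.mono mono_onD[OF mono]) auto
    qed (use g0 in auto)
    also have "\<dots> \<le> ennreal (4 / (1 - lam)\<^sup>2) * (\<integral>\<^sup>+x\<in>{0..}. ennreal ((g x - g (max (x - h) 0))\<^sup>2) \<partial>\<mu>)"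
    proof (intro mult_left_mono nn_integral_mono)
      have "(min a c - min b c)\<^sup>2 \<le> (a - b)\<^sup>2" for a b c :: real
        by (subst abs_le_square_iff[symmetric]) (auto simp: min_def)
      then show "ennreal ((?gn x - ?gn (max (x - h) 0))\<^sup>2) * indicator {0..} x
          \<le> ennreal ((g x - g (max (x - h) 0))\<^sup>2) * indicator {0..} x" for x
        by (intro mult_right_mono ennreal_leI) auto
    qed simp
    finally show "integral\<^sup>N \<mu> (G n) \<le> \<dots>" .
  qed
  finally show ?thesis .
qed

theorem lemma2p2:
  fixes h lam :: real and \<mu> :: "real measure" and f :: "real \<Rightarrow> real"
  assumes "h > 0" and "0 \<le> lam" and "lam < 1"
    and "class_M h lam \<mu>"
    and "convex_on UNIV f" and "f 0 = 0"
  shows "(\<integral>\<^sup>+ x. ennreal ((exp (f x / 2) - exp (- f x / 2))\<^sup>2) \<partial>\<mu>)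
         \<le> ennreal (8 / (1 - lam)\<^sup>2) *
           (\<integral>\<^sup>+ x. ennreal (exp (f x) * (discrete_grad h f x)\<^sup>2) \<partial>\<mu>)"
proof -
  note h = assms(1) and lam = assms(2,3) and cm = assms(4) and cf = assms(5) and f0 = assms(6)
  have sets: "sets \<mu> = sets borel" and sym: "distr \<mu> borel uminus = \<mu>"
    using cm by (simp_all add: class_M_def)
  have contf: "continuous_on UNIV f" using convex_on_continuous[OF _ cf] by simp
  have [measurable]: "f \<in> borel_measurable borel" using contf by (rule borel_measurable_continuous_onI)
  define G where "G x = 2 * sinh (even_majorant f x / 2)" for x
  define R where "R x = ennreal (exp (f x) * (discrete_grad h f x)\<^sup>2)" for x
  have contG: "continuous_on UNIV G"
    unfolding G_def by (intro continuous_intros continuous_on_even_majorant contf) auto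
  have [measurable]: "G \<in> borel_measurable borel" using contG by (rule borel_measurable_continuous_onI)
  have [measurable]: "R \<in> borel_measurable borel" unfolding R_def discrete_grad_def Let_def by measurable
  have monoG: "mono_on {0..} G"
    using mono_onD[OF even_majorant_mono_on[OF cf f0]] by (auto intro!: mono_onI simp: G_def)
  have increment: "ennreal ((G x - G (max (x - h) 0))\<^sup>2) * indicator {0..} x
      \<le> (R x + R (- x)) * indicator {0<..} x" for x
  proof (cases "0 < x")
    case True
    then show ?thesis
      using even_majorant_increment_le_discrete_grad[OF cf f0, of h x] h
      by (simp add: G_def R_def ennreal_leI flip: ennreal_plus)
  qed (use h in \<open>auto simp: indicator_def max_def\<close>)
  have "(\<integral>\<^sup>+ x. ennreal ((exp (f x / 2) - exp (- f x / 2))\<^sup>2) \<partial>\<mu>)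
      \<le> (\<integral>\<^sup>+x. ennreal ((G \<bar>x\<bar>)\<^sup>2) \<partial>\<mu>)"
    unfolding G_def by (intro nn_integral_mono ennreal_leI exp_half_diff_sq_le_even_majorant[OF cf f0])
  also have "\<dots> \<le> 2 * (\<integral>\<^sup>+x\<in>{0..}. ennreal ((G x)\<^sup>2) \<partial>\<mu>)"
    by (rule nn_integral_abs_le_twice_nonneg_part[OF sets sym]) measurable
  also have "\<dots> \<le> 2 * (ennreal (4 / (1 - lam)\<^sup>2)
      * (\<integral>\<^sup>+x\<in>{0..}. ennreal ((G x - G (max (x - h) 0))\<^sup>2) \<partial>\<mu>))"
    using f0 by (intro mult_left_mono class_M_hardy[OF cm lam contG monoG])
      (auto simp: G_def even_majorant_def)
  also have "\<dots> \<le> 2 * (ennreal (4 / (1 - lam)\<^sup>2) * (\<integral>\<^sup>+x\<in>{0<..}. R x + R (- x) \<partial>\<mu>))"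
    using increment by (intro mult_left_mono nn_integral_mono) auto
  also have "\<dots> \<le> 2 * (ennreal (4 / (1 - lam)\<^sup>2) * (\<integral>\<^sup>+x. R x \<partial>\<mu>))"
    by (intro mult_left_mono nn_integral_pos_part_reflect_le[OF sets sym]) auto
  also have "\<dots> = ennreal (8 / (1 - lam)\<^sup>2) * (\<integral>\<^sup>+x. R x \<partial>\<mu>)"
    using ennreal_mult[of 2 "4 / (1 - lam)\<^sup>2"] by (simp add: mult.assoc)
  finally show ?thesis by (simp add: R_def)
qed

end
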